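(* Let $P_0,P_1,P_2\in\mathbb H$ be three points not lying on a common geodesic, labelled so that $\chi:=\langle P_0\tilde\times P_1,P_2\rangle>0$, and let $\varepsilon\in\{-1,1\}$. For $i\in\mathbb Z/3\mathbb Z$ let $$R_i:=\frac{\sqrt{1-2\langle P_{i+1},P_{i+2}\rangle}\,(P_{i+1}+P_{i+2})+\varepsilon\, P_{i+1}\tilde\times P_{i+2}}{\sqrt3\,\bigl(1-\langle P_{i+1},P_{i+2}\rangle\bigr)}\in\mathbb H$$ (the centroid of the equilateral triangle $P_{i+1}P_{i+2}Q_i$ with $Q_i=\frac{-\langle P_{i+1},P_{i+2}\rangle(P_{i+1}+P_{i+2})+\varepsilon\sqrt{1-2\langle P_{i+1},P_{i+2}\rangle}\,P_{i+1}\tilde\times P_{i+2}}{1-\langle P_{i+1},P_{i+2}\rangle}$), so that $R_0R_1R_2$ is the Napoleonization of $P_0P_1P_2$. If the triangle $R_0R_1R_2$ is equilateral, i.e. $\langle R_0,R_1\rangle=\langle R_1,R_2\rangle=\langle R_2,R_0\rangle$, then $P_0P_1P_2$ is equilateral, i.e. $\langle P_0,P_1\rangle=\langle P_1,P_2\rangle=\langle P_2,P_0\rangle$.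
   Context: On $\mathbb R^3$ the Minkowski form is $\langle v,w\rangle=-v_1w_1+v_2w_2+v_3w_3$. The hyperbolic plane is the upper sheet $\mathbb H=\{P\in\mathbb R^3:\langle P,P\rangle=-1,\ P_1\ge 1\}$, with distance $\operatorname{arccosh}(-\langle P,Q\rangle)$. The hyperbolic cross product is $v\tilde\times w:=J(v\times w)$, where $\times$ is the Euclidean cross product and $J=\mathrm{diag}(-1,1,1)$. The centroid of a triangle with vertices $A,B,C\in\mathbb H$ is $(A+B+C)/\sqrt{-\langle A+B+C,A+B+C\rangle}$. A triangle $ABC$ in $\mathbb H$ is equilateral if $\langle A,B\rangle=\langle B,C\rangle=\langle C,A\rangle$. The sign $\varepsilon$ is used for all three sides (equilateral triangles all erected on the same side). *)

theory Defs
  imports "HOL-Analysis.Analysis" "HOL-Analysis.Cross3"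
begin

definition mink :: "real^3 \<Rightarrow> real^3 \<Rightarrow> real" where
  "mink v w = - (v$1 * w$1) + v$2 * w$2 + v$3 * w$3"

definition Jmat :: "real^3 \<Rightarrow> real^3" where
  "Jmat v = vector [- (v$1), v$2, v$3]"

definition hcross :: "real^3 \<Rightarrow> real^3 \<Rightarrow> real^3" where
  "hcross v w = Jmat (cross3 v w)"

definition hyp_plane :: "(real^3) set" where
  "hyp_plane = {P. mink P P = -1 \<and> P$1 \<ge> 1}"

text \<open>A geodesic of the hyperboloid model is the intersection with a plane through
  the origin; three points lie on a common geodesic iff they are linearly dependent.\<close>
definition on_common_geodesic :: "real^3 \<Rightarrow> real^3 \<Rightarrow> real^3 \<Rightarrow> bool" where
  "on_common_geodesic A B C \<longleftrightarrow> (\<exists>n::real^3. n \<noteq> 0 \<and> n \<bullet> A = 0 \<and> n \<bullet> B = 0 \<and> n \<bullet> C = 0)"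

definition napR :: "real \<Rightarrow> real^3 \<Rightarrow> real^3 \<Rightarrow> real^3" where
  "napR \<epsilon> A B =
     (1 / (sqrt 3 * (1 - mink A B))) *\<^sub>R
       (sqrt (1 - 2 * mink A B) *\<^sub>R (A + B) + \<epsilon> *\<^sub>R hcross A B)"

end

theory Submission
  imports Defs
begin

text \<open>Write \<open>x, y, z\<close> for the side parameters \<open>sqrt (1 - 2 \<langle>P\<^sub>i, P\<^sub>j\<rangle>)\<close> and
  \<open>t = \<epsilon> \<chi>\<close>. Expanding the Napoleon centroids, each pairing \<open>\<langle>R\<^sub>i, R\<^sub>j\<rangle>\<close> is \<open>4/3\<close> times
  a polynomial in \<open>x, y, z, t\<close> divided by \<open>(1 + x\<^sup>2) (1 + y\<^sup>2)\<close>. After clearing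
  denominators, the two cyclic differences of these pairings factor as \<open>(x - z) K\<close> and
  \<open>(y - x) K\<close> with one cyclically invariant \<open>K\<close>. If the side parameters are not all
  equal then \<open>K = 0\<close>; squaring and substituting \<open>t\<^sup>2\<close> (a Gram determinant) turns this
  into a sum of the squares \<open>(x - y)\<^sup>2\<close> with positive weights being zero, which is absurd.
  Only \<open>\<epsilon>\<^sup>2 = 1\<close> and \<open>t\<^sup>2\<close> enter.\<close>

lemma mink_commute: "mink v w = mink w v"
  by (simp add: mink_def algebra_simps)

lemma mink_add_left: "mink (u + v) w = mink u w + mink v w"
  and mink_add_right: "mink w (u + v) = mink w u + mink w v"
  and mink_scaleR_left: "mink (r *\<^sub>R u) w = r * mink u w"
  and mink_scaleR_right: "mink w (r *\<^sub>R u) = r * mink w u"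
  by (simp_all add: mink_def algebra_simps)

lemma hcross_nth:
  "hcross A B $ 1 = A$3 * B$2 - A$2 * B$3"
  "hcross A B $ 2 = A$3 * B$1 - A$1 * B$3"
  "hcross A B $ 3 = A$1 * B$2 - A$2 * B$1"
  by (simp_all add: hcross_def Jmat_def cross3_def vector_def)

lemma mink_hcross_left: "mink (hcross A B) A = 0"
  and mink_hcross_right: "mink (hcross A B) B = 0"
  and mink_hcross_rotate: "mink (hcross A B) C = mink (hcross B C) A"
  and mink_hcross_hcross:
    "mink (hcross A B) (hcross C D) = mink A D * mink B C - mink A C * mink B D"
  by (simp_all add: mink_def hcross_nth algebra_simps)

text \<open>Minus the Gram determinant of three points of the hyperboloid with pairwise Minkowski
  products \<open>u, v, w\<close>.\<close>
definition hyp_gram :: "real \<Rightarrow> real \<Rightarrow> real \<Rightarrow> real" where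
  "hyp_gram u v w = 1 - 2 * u * v * w - u\<^sup>2 - v\<^sup>2 - w\<^sup>2"

lemma mink_hcross_square:
  assumes "A \<in> hyp_plane" "B \<in> hyp_plane" "C \<in> hyp_plane"
  shows "(mink (hcross A B) C)\<^sup>2 = hyp_gram (mink A B) (mink B C) (mink C A)"
proof -
  have "(mink (hcross A B) C)\<^sup>2 = - (mink A A * mink B B * mink C C
      + 2 * mink A B * mink B C * mink C A - mink A A * (mink B C)\<^sup>2
      - mink B B * (mink C A)\<^sup>2 - mink C C * (mink A B)\<^sup>2)"
    by (simp add: mink_def hcross_nth power2_eq_square algebra_simps)
  then show ?thesis
    using assms by (simp add: hyp_plane_def hyp_gram_def)
qed

lemma mink_hyp_plane_le_neg1:
  assumes "A \<in> hyp_plane" "B \<in> hyp_plane"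
  shows "mink A B \<le> -1"
proof -
  define s where "s = A$2 * B$2 + A$3 * B$3"
  define p where "p = (A$2)\<^sup>2 + (A$3)\<^sup>2"
  define q where "q = (B$2)\<^sup>2 + (B$3)\<^sup>2"
  have A: "(A$1)\<^sup>2 = 1 + p" "A$1 \<ge> 1" and B: "(B$1)\<^sup>2 = 1 + q" "B$1 \<ge> 1"
    using assms by (auto simp: hyp_plane_def mink_def p_def q_def power2_eq_square)
  have "s\<^sup>2 \<le> p * q"
  proof -
    have "s\<^sup>2 + (A$2 * B$3 - A$3 * B$2)\<^sup>2 = p * q"
      by (simp add: s_def p_def q_def power2_eq_square algebra_simps)
    then show ?thesis by (smt (verit) zero_le_power2)
  qed
  moreover have "2 * s \<le> p + q"
  proof -
    have "p + q - 2 * s = (A$2 - B$2)\<^sup>2 + (A$3 - B$3)\<^sup>2"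
      by (simp add: s_def p_def q_def power2_eq_square algebra_simps)
    then show ?thesis by (smt (verit) zero_le_power2)
  qed
  moreover have "(A$1 * B$1)\<^sup>2 = 1 + p + q + p * q"
    by (simp add: A B algebra_simps)
  ultimately have "(s + 1)\<^sup>2 \<le> (A$1 * B$1)\<^sup>2"
    by (simp add: power2_sum)
  then have "s + 1 \<le> A$1 * B$1"
    using A(2) B(2) by (smt (verit) mult_nonneg_nonneg power2_le_imp_le)
  then show ?thesis by (simp add: mink_def s_def)
qed

definition side_param :: "real^3 \<Rightarrow> real^3 \<Rightarrow> real" where
  "side_param A B = sqrt (1 - 2 * mink A B)"

lemma side_param_ge_1:
  assumes "A \<in> hyp_plane" "B \<in> hyp_plane"
  shows "side_param A B \<ge> 1"
  using mink_hyp_plane_le_neg1[OF assms] by (simp add: side_param_def)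

lemma mink_eq_side_param:
  assumes "A \<in> hyp_plane" "B \<in> hyp_plane"
  shows "mink A B = (1 - (side_param A B)\<^sup>2) / 2"
  using mink_hyp_plane_le_neg1[OF assms] by (simp add: side_param_def)

definition napoleon_pairing :: "real \<Rightarrow> real \<Rightarrow> real \<Rightarrow> real \<Rightarrow> real" where
  "napoleon_pairing x y z t =
     x * y * (1 - x\<^sup>2 - y\<^sup>2 - z\<^sup>2) / 2 + t * (x + y) - (1 - z\<^sup>2) / 2 - (1 - x\<^sup>2) * (1 - y\<^sup>2) / 4"

lemma mink_napR_napR_expand:
  assumes B: "B \<in> hyp_plane" and \<epsilon>: "\<epsilon>\<^sup>2 = 1"
  shows "mink (napR \<epsilon> A B) (napR \<epsilon> B C) =
    1 / (3 * (1 - mink A B) * (1 - mink B C)) *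
      (side_param A B * side_param B C * (mink A B + mink B C + mink C A - 1)
       + (side_param A B + side_param B C) * (\<epsilon> * mink (hcross A B) C)
       - (mink C A + mink A B * mink B C))"
proof -
  define x where "x = side_param A B"
  define y where "y = side_param B C"
  define k1 where "k1 = 1 / (sqrt 3 * (1 - mink A B))"
  define k2 where "k2 = 1 / (sqrt 3 * (1 - mink B C))"
  have BB: "mink B B = -1"
    using B by (simp add: hyp_plane_def)
  have "mink (napR \<epsilon> A B) (napR \<epsilon> B C) = k1 * k2 * (x * y * mink (A + B) (B + C)
      + x * \<epsilon> * mink (A + B) (hcross B C) + \<epsilon> * y * mink (hcross A B) (B + C)
      + \<epsilon>\<^sup>2 * mink (hcross A B) (hcross B C))"
    unfolding napR_def side_param_def[symmetric] x_def[symmetric] y_def[symmetric]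
      k1_def[symmetric] k2_def[symmetric]
    by (simp add: mink_scaleR_left mink_scaleR_right mink_add_left mink_add_right
        algebra_simps power2_eq_square)
  also have "mink (A + B) (B + C) = mink A B + mink B C + mink C A - 1"
    by (simp add: mink_add_left mink_add_right BB mink_commute[of A C] mink_commute[of B C])
  also have "mink (A + B) (hcross B C) = mink (hcross A B) C"
    by (simp add: mink_commute[of "A + B"] mink_add_right mink_hcross_left
        mink_hcross_rotate[of A B C])
  also have "mink (hcross A B) (B + C) = mink (hcross A B) C"
    by (simp add: mink_add_right mink_hcross_right)
  also have "mink (hcross A B) (hcross B C) = - (mink C A + mink A B * mink B C)"
    by (simp add: mink_hcross_hcross BB mink_commute[of A C])
  also have "k1 * k2 = 1 / (3 * (1 - mink A B) * (1 - mink B C))"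
    unfolding k1_def k2_def by (simp add: field_simps)
  finally show ?thesis
    using \<epsilon> by (simp add: x_def y_def algebra_simps)
qed

lemma mink_napR_napR:
  assumes A: "A \<in> hyp_plane" and B: "B \<in> hyp_plane" and C: "C \<in> hyp_plane"
    and \<epsilon>: "\<epsilon>\<^sup>2 = 1"
  shows "mink (napR \<epsilon> A B) (napR \<epsilon> B C) =
    4 / 3 * (napoleon_pairing (side_param A B) (side_param B C) (side_param C A)
               (\<epsilon> * mink (hcross A B) C)
             / ((1 + (side_param A B)\<^sup>2) * (1 + (side_param B C)\<^sup>2)))"
proof -
  define x where "x = side_param A B"
  define y where "y = side_param B C"
  define z where "z = side_param C A"
  define t where "t = \<epsilon> * mink (hcross A B) C"
  have sides: "mink A B = (1 - x\<^sup>2) / 2" "mink B C = (1 - y\<^sup>2) / 2" "mink C A = (1 - z\<^sup>2) / 2"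
    unfolding x_def y_def z_def using mink_eq_side_param A B C by auto
  have num: "x * y * (mink A B + mink B C + mink C A - 1) + (x + y) * t
      - (mink C A + mink A B * mink B C) = napoleon_pairing x y z t"
    unfolding sides napoleon_pairing_def by (simp add: field_simps)
  have den: "3 * (1 - mink A B) * (1 - mink B C) = 3 / 4 * ((1 + x\<^sup>2) * (1 + y\<^sup>2))"
    unfolding sides by (simp add: field_simps)
  have "mink (napR \<epsilon> A B) (napR \<epsilon> B C) =
      1 / (3 / 4 * ((1 + x\<^sup>2) * (1 + y\<^sup>2))) * napoleon_pairing x y z t"
    using mink_napR_napR_expand[OF B \<epsilon>, of A C]
    unfolding x_def[symmetric] y_def[symmetric] t_def[symmetric] num den .
  then show ?thesis
    unfolding x_def y_def z_def t_def by simp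
qed

definition napoleon_defect :: "real \<Rightarrow> real \<Rightarrow> real \<Rightarrow> real \<Rightarrow> real" where
  "napoleon_defect x y z t =
     (x\<^sup>2 + y\<^sup>2 + z\<^sup>2 - 1) / 2 * (x * y * z - x - y - z) - t * (x * y + y * z + z * x - 1)"

lemma napoleon_pairing_rotate_diff:
  "(1 + z\<^sup>2) * napoleon_pairing x y z t - (1 + x\<^sup>2) * napoleon_pairing y z x t
     = (x - z) * napoleon_defect x y z t"
  by (simp add: napoleon_pairing_def napoleon_defect_def field_simps power2_eq_square)

lemma napoleon_defect_rotate: "napoleon_defect y z x t = napoleon_defect x y z t"
  by (simp add: napoleon_defect_def algebra_simps)

lemma napoleon_defect_square_identity:
  "((x\<^sup>2 + y\<^sup>2 + z\<^sup>2 - 1) / 2 * (x * y * z - x - y - z))\<^sup>2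
     - hyp_gram ((1 - x\<^sup>2) / 2) ((1 - y\<^sup>2) / 2) ((1 - z\<^sup>2) / 2) * (x * y + y * z + z * x - 1)\<^sup>2
   = (1 + x\<^sup>2) * (1 + y\<^sup>2) * (1 + z\<^sup>2) / 4 *
       ((x - y)\<^sup>2 * ((x + y)\<^sup>2 / 2 + z\<^sup>2 - 1) + (y - z)\<^sup>2 * ((y + z)\<^sup>2 / 2 + x\<^sup>2 - 1)
        + (z - x)\<^sup>2 * ((z + x)\<^sup>2 / 2 + y\<^sup>2 - 1))"
  by (simp add: hyp_gram_def field_simps power2_eq_square)

lemma weighted_square_sum_pos:
  fixes x y z :: real
  assumes "x \<ge> 1" "y \<ge> 1" "z \<ge> 1" "\<not> (x = y \<and> y = z)"
  shows "(x - y)\<^sup>2 * ((x + y)\<^sup>2 / 2 + z\<^sup>2 - 1) + (y - z)\<^sup>2 * ((y + z)\<^sup>2 / 2 + x\<^sup>2 - 1)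
           + (z - x)\<^sup>2 * ((z + x)\<^sup>2 / 2 + y\<^sup>2 - 1) > 0"
proof -
  have weight_pos: "(a + b)\<^sup>2 / 2 + c\<^sup>2 - 1 > 0" if "a \<ge> 1" "b \<ge> 1" "c \<ge> 1" for a b c :: real
  proof -
    have "(a + b)\<^sup>2 \<ge> 2\<^sup>2" "c\<^sup>2 \<ge> 1"
      using that by (intro power_mono one_le_power; simp)+
    then show ?thesis by simp
  qed
  have "0 < (x - y)\<^sup>2 \<or> 0 < (y - z)\<^sup>2"
    using assms(4) by auto
  then show ?thesis
    using weight_pos[of x y z] weight_pos[of y z x] weight_pos[of z x y] assms(1-3)
    by (smt (verit) mult_pos_pos mult_nonneg_nonneg zero_le_power2)
qed

lemma napoleon_defect_nonzero:
  assumes "x \<ge> 1" "y \<ge> 1" "z \<ge> 1" "\<not> (x = y \<and> y = z)"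
    and t: "t\<^sup>2 = hyp_gram ((1 - x\<^sup>2) / 2) ((1 - y\<^sup>2) / 2) ((1 - z\<^sup>2) / 2)"
  shows "napoleon_defect x y z t \<noteq> 0"
proof
  assume "napoleon_defect x y z t = 0"
  then have "((x\<^sup>2 + y\<^sup>2 + z\<^sup>2 - 1) / 2 * (x * y * z - x - y - z))\<^sup>2
      = t\<^sup>2 * (x * y + y * z + z * x - 1)\<^sup>2"
    by (simp add: napoleon_defect_def power_mult_distrib)
  then have "(1 + x\<^sup>2) * (1 + y\<^sup>2) * (1 + z\<^sup>2) / 4 *
       ((x - y)\<^sup>2 * ((x + y)\<^sup>2 / 2 + z\<^sup>2 - 1) + (y - z)\<^sup>2 * ((y + z)\<^sup>2 / 2 + x\<^sup>2 - 1)
        + (z - x)\<^sup>2 * ((z + x)\<^sup>2 / 2 + y\<^sup>2 - 1)) = 0"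
    unfolding napoleon_defect_square_identity[symmetric] t by simp
  moreover have "(1 + x\<^sup>2) * (1 + y\<^sup>2) * (1 + z\<^sup>2) / 4 *
       ((x - y)\<^sup>2 * ((x + y)\<^sup>2 / 2 + z\<^sup>2 - 1) + (y - z)\<^sup>2 * ((y + z)\<^sup>2 / 2 + x\<^sup>2 - 1)
        + (z - x)\<^sup>2 * ((z + x)\<^sup>2 / 2 + y\<^sup>2 - 1)) > 0"
    using weighted_square_sum_pos[OF assms(1-4)] by (simp add: add_pos_nonneg)
  ultimately show False
    by linarith
qed

lemma napoleon_pairings_eq_imp_eq:
  fixes x y z t :: real
  assumes "x \<ge> 1" "y \<ge> 1" "z \<ge> 1"
    and t: "t\<^sup>2 = hyp_gram ((1 - x\<^sup>2) / 2) ((1 - y\<^sup>2) / 2) ((1 - z\<^sup>2) / 2)"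
    and xy_yz: "napoleon_pairing x y z t / ((1 + x\<^sup>2) * (1 + y\<^sup>2))
              = napoleon_pairing y z x t / ((1 + y\<^sup>2) * (1 + z\<^sup>2))"
    and yz_zx: "napoleon_pairing y z x t / ((1 + y\<^sup>2) * (1 + z\<^sup>2))
              = napoleon_pairing z x y t / ((1 + z\<^sup>2) * (1 + x\<^sup>2))"
  shows "x = y \<and> y = z"
proof (rule ccontr)
  assume neq: "\<not> (x = y \<and> y = z)"
  have cross_multiply: "r * a = p * b"
    if "a / (p * q) = b / (q * r)" "p \<noteq> 0" "q \<noteq> 0" "r \<noteq> 0" for a b p q r :: real
    using that by (simp add: field_simps)
  have pos: "1 + x\<^sup>2 \<noteq> 0" "1 + y\<^sup>2 \<noteq> 0" "1 + z\<^sup>2 \<noteq> 0"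
    by (smt (verit) zero_le_power2)+
  have "(1 + z\<^sup>2) * napoleon_pairing x y z t = (1 + x\<^sup>2) * napoleon_pairing y z x t"
    using cross_multiply[OF xy_yz pos] .
  then have "(x - z) * napoleon_defect x y z t = 0"
    by (simp add: napoleon_pairing_rotate_diff[symmetric])
  moreover have "(1 + x\<^sup>2) * napoleon_pairing y z x t = (1 + y\<^sup>2) * napoleon_pairing z x y t"
    using cross_multiply[OF yz_zx pos(2,3,1)] .
  then have "(y - x) * napoleon_defect y z x t = 0"
    by (simp add: napoleon_pairing_rotate_diff[symmetric])
  ultimately show False
    using napoleon_defect_nonzero[OF assms(1-3) neq t] napoleon_defect_rotate[of y z x t] neq
    by simp
qed

lemma napoleon_equilateral_imp_side_params_eq:
  assumes A: "A \<in> hyp_plane" and B: "B \<in> hyp_plane" and C: "C \<in> hyp_plane"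
    and \<epsilon>: "\<epsilon>\<^sup>2 = 1"
    and "mink (napR \<epsilon> A B) (napR \<epsilon> B C) = mink (napR \<epsilon> B C) (napR \<epsilon> C A)"
    and "mink (napR \<epsilon> B C) (napR \<epsilon> C A) = mink (napR \<epsilon> C A) (napR \<epsilon> A B)"
  shows "side_param A B = side_param B C \<and> side_param B C = side_param C A"
proof -
  define x where "x = side_param A B"
  define y where "y = side_param B C"
  define z where "z = side_param C A"
  define t where "t = \<epsilon> * mink (hcross A B) C"
  have t_rotate: "\<epsilon> * mink (hcross B C) A = t" "\<epsilon> * mink (hcross C A) B = t"
    unfolding t_def by (metis mink_hcross_rotate)+
  note pairings = mink_napR_napR[OF A B C \<epsilon>] mink_napR_napR[OF B C A \<epsilon>]
    mink_napR_napR[OF C A B \<epsilon>]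
  have "t\<^sup>2 = hyp_gram ((1 - x\<^sup>2) / 2) ((1 - y\<^sup>2) / 2) ((1 - z\<^sup>2) / 2)"
    using mink_hcross_square[OF A B C] \<epsilon> mink_eq_side_param A B C
    by (simp add: t_def x_def y_def z_def power_mult_distrib)
  moreover have "napoleon_pairing x y z t / ((1 + x\<^sup>2) * (1 + y\<^sup>2))
      = napoleon_pairing y z x t / ((1 + y\<^sup>2) * (1 + z\<^sup>2))"
    using assms(5) unfolding pairings x_def[symmetric] y_def[symmetric] z_def[symmetric]
      t_def[symmetric] t_rotate by (simp only: mult_cancel_left) simp
  moreover have "napoleon_pairing y z x t / ((1 + y\<^sup>2) * (1 + z\<^sup>2))
      = napoleon_pairing z x y t / ((1 + z\<^sup>2) * (1 + x\<^sup>2))"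
    using assms(6) unfolding pairings x_def[symmetric] y_def[symmetric] z_def[symmetric]
      t_def[symmetric] t_rotate by (simp only: mult_cancel_left) simp
  ultimately show ?thesis
    using side_param_ge_1 A B C unfolding x_def y_def z_def
    by (intro napoleon_pairings_eq_imp_eq) auto
qed

theorem theorem1p1:
  fixes P0 P1 P2 :: "real^3" and \<epsilon> :: real
  assumes "P0 \<in> hyp_plane" "P1 \<in> hyp_plane" "P2 \<in> hyp_plane"
    and "\<not> on_common_geodesic P0 P1 P2"
    and "mink (hcross P0 P1) P2 > 0"
    and "\<epsilon> = -1 \<or> \<epsilon> = 1"
    and "mink (napR \<epsilon> P1 P2) (napR \<epsilon> P2 P0) = mink (napR \<epsilon> P2 P0) (napR \<epsilon> P0 P1)"
    and "mink (napR \<epsilon> P2 P0) (napR \<epsilon> P0 P1) = mink (napR \<epsilon> P0 P1) (napR \<epsilon> P1 P2)"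
  shows "mink P0 P1 = mink P1 P2 \<and> mink P1 P2 = mink P2 P0"
proof -
  have "\<epsilon>\<^sup>2 = 1"
    using assms(6) by auto
  then have "side_param P1 P2 = side_param P2 P0 \<and> side_param P2 P0 = side_param P0 P1"
    using napoleon_equilateral_imp_side_params_eq assms(1-3,7,8) by blast
  then show ?thesis
    using mink_eq_side_param assms(1-3) by metis
qed

end
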